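(* Let $P$ be a finite poset whose Hasse diagram is a rooted tree. (1) If the root is the greatest element of $P$, then the basic elements of $P$ are exactly the leaves (the minimal elements). (2) If the root is the least element of $P$, then the basic elements of $P$ are exactly the minimal elements of the induced subposet $P_1=\{x\in P:\ \text{there is exactly one leaf } \ell \text{ with } x\le \ell\}$.
   Context: Such a poset is a $\mathcal{V}$-poset. An element $x$ of a $\mathcal{V}$-poset is basic if: (B.1) there are no two incomparable elements $u,v$ with $x>u$ and $x>v$; (B.2) there are no two incomparable elements $u,v$ with $x<u$ and $x<v$; (B.3) there is no element $u$ with $u<x$ such that for all $w\neq u,x$ one has ($u\ge w\iff x\ge w$) and ($u\le w\iff x\le w$). The leaves of the rooted tree are its vertices with no children (the vertices of degree one other than the root, or the root itself if $P$ has one element). *)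

theory Defs
  imports Main
begin

definition poset_on :: "'a set \<Rightarrow> ('a \<Rightarrow> 'a \<Rightarrow> bool) \<Rightarrow> bool" where
  "poset_on P le \<longleftrightarrow>
     (\<forall>x\<in>P. le x x) \<and>
     (\<forall>x\<in>P. \<forall>y\<in>P. le x y \<and> le y x \<longrightarrow> x = y) \<and>
     (\<forall>x\<in>P. \<forall>y\<in>P. \<forall>z\<in>P. le x y \<and> le y z \<longrightarrow> le x z)"

definition lt :: "('a \<Rightarrow> 'a \<Rightarrow> bool) \<Rightarrow> 'a \<Rightarrow> 'a \<Rightarrow> bool" where
  "lt le x y \<longleftrightarrow> le x y \<and> x \<noteq> y"

definition incomparable :: "('a \<Rightarrow> 'a \<Rightarrow> bool) \<Rightarrow> 'a \<Rightarrow> 'a \<Rightarrow> bool" where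
  "incomparable le u v \<longleftrightarrow> \<not> le u v \<and> \<not> le v u"

definition covers :: "'a set \<Rightarrow> ('a \<Rightarrow> 'a \<Rightarrow> bool) \<Rightarrow> 'a \<Rightarrow> 'a \<Rightarrow> bool" where
  "covers P le x y \<longleftrightarrow> x \<in> P \<and> y \<in> P \<and> lt le x y \<and> \<not> (\<exists>z\<in>P. lt le x z \<and> lt le z y)"

definition hasse_adj :: "'a set \<Rightarrow> ('a \<Rightarrow> 'a \<Rightarrow> bool) \<Rightarrow> 'a \<Rightarrow> 'a \<Rightarrow> bool" where
  "hasse_adj P le x y \<longleftrightarrow> covers P le x y \<or> covers P le y x"

definition graph_connected :: "'a set \<Rightarrow> ('a \<Rightarrow> 'a \<Rightarrow> bool) \<Rightarrow> bool" where
  "graph_connected V adj \<longleftrightarrow>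
     (\<forall>x\<in>V. \<forall>y\<in>V. (\<lambda>a b. a \<in> V \<and> b \<in> V \<and> adj a b)\<^sup>*\<^sup>* x y)"

definition has_cycle :: "'a set \<Rightarrow> ('a \<Rightarrow> 'a \<Rightarrow> bool) \<Rightarrow> bool" where
  "has_cycle V adj \<longleftrightarrow>
     (\<exists>cs. length cs \<ge> 3 \<and> distinct cs \<and> set cs \<subseteq> V \<and>
        (\<forall>i < length cs. adj (cs ! i) (cs ! ((i + 1) mod length cs))))"

definition is_tree :: "'a set \<Rightarrow> ('a \<Rightarrow> 'a \<Rightarrow> bool) \<Rightarrow> bool" where
  "is_tree V adj \<longleftrightarrow> V \<noteq> {} \<and> graph_connected V adj \<and> \<not> has_cycle V adj"

definition degree :: "'a set \<Rightarrow> ('a \<Rightarrow> 'a \<Rightarrow> bool) \<Rightarrow> 'a \<Rightarrow> nat" where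
  "degree V adj x = card {y \<in> V. adj x y}"

definition leaves :: "'a set \<Rightarrow> ('a \<Rightarrow> 'a \<Rightarrow> bool) \<Rightarrow> 'a \<Rightarrow> 'a set" where
  "leaves V adj r = {x \<in> V. (x \<noteq> r \<and> degree V adj x = 1) \<or> (x = r \<and> V = {r})}"

definition basic :: "'a set \<Rightarrow> ('a \<Rightarrow> 'a \<Rightarrow> bool) \<Rightarrow> 'a \<Rightarrow> bool" where
  "basic P le x \<longleftrightarrow> x \<in> P \<and>
     \<not> (\<exists>u\<in>P. \<exists>v\<in>P. incomparable le u v \<and> lt le u x \<and> lt le v x) \<and>
     \<not> (\<exists>u\<in>P. \<exists>v\<in>P. incomparable le u v \<and> lt le x u \<and> lt le x v) \<and>
     \<not> (\<exists>u\<in>P. lt le u x \<and>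
          (\<forall>w\<in>P. w \<noteq> u \<and> w \<noteq> x \<longrightarrow>
              (le w u \<longleftrightarrow> le w x) \<and> (le u w \<longleftrightarrow> le x w)))"

definition minimal_elements :: "'a set \<Rightarrow> ('a \<Rightarrow> 'a \<Rightarrow> bool) \<Rightarrow> 'a set" where
  "minimal_elements S le = {x \<in> S. \<not> (\<exists>y\<in>S. lt le y x)}"

end

(*
  Acyclicity of the Hasse diagram forbids two distinct upper covers of an element from having
  a common upper bound: covering paths from both covers up to a minimal common upper bound
  would close a cycle through the element. So below a greatest element every strict up-set is
  a chain, and above a least element every strict down-set is a chain.

  If x is basic and y < x, let c be the largest element below x, unique by (B.1). Were the
  strict up-set of y a chain, everything above c would lie above x, making c and x twins
  against (B.3). Hence basic elements are minimal among the elements with a chain above them,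
  and with chains below the converse holds as well. With a greatest element every element
  has a chain above it; with a least element, having a chain above means lying below a unique
  maximal element. Finally, each non-root vertex has exactly one upper cover under a greatest
  element, so its degree is one precisely when it is minimal.
*)

theory Submission
  imports Defs
begin

definition chain_above :: "'a set \<Rightarrow> ('a \<Rightarrow> 'a \<Rightarrow> bool) \<Rightarrow> 'a \<Rightarrow> bool" where
  "chain_above P le x \<longleftrightarrow>
     \<not> (\<exists>u\<in>P. \<exists>v\<in>P. incomparable le u v \<and> lt le x u \<and> lt le x v)"

definition order_twins :: "'a set \<Rightarrow> ('a \<Rightarrow> 'a \<Rightarrow> bool) \<Rightarrow> 'a \<Rightarrow> 'a \<Rightarrow> bool" where
  "order_twins P le u x \<longleftrightarrow>
     (\<forall>w\<in>P. w \<noteq> u \<and> w \<noteq> x \<longrightarrow> (le w u \<longleftrightarrow> le w x) \<and> (le u w \<longleftrightarrow> le x w))"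

lemma lt_conversep [simp]: "lt le\<inverse>\<inverse> x y = lt le y x"
  unfolding lt_def by auto

lemma incomparable_conversep [simp]: "incomparable le\<inverse>\<inverse> u v = incomparable le u v"
  unfolding incomparable_def by auto

lemma covers_conversep [simp]: "covers P le\<inverse>\<inverse> x y = covers P le y x"
  unfolding covers_def by auto

lemma hasse_adj_conversep [simp]: "hasse_adj P le\<inverse>\<inverse> = hasse_adj P le"
  unfolding hasse_adj_def by (intro ext) auto

lemma basic_iff:
  "basic P le x \<longleftrightarrow> x \<in> P \<and> chain_above P le\<inverse>\<inverse> x \<and> chain_above P le x \<and>
     \<not> (\<exists>u\<in>P. lt le u x \<and> order_twins P le u x)"
  unfolding basic_def chain_above_def order_twins_def by simp

lemma has_cycleI:
  assumes "successively R cs" "length cs \<ge> 3" "distinct cs" "set cs \<subseteq> V"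
    and "R (last cs) (hd cs)"
  shows "has_cycle V R"
  unfolding has_cycle_def
proof (intro exI conjI allI impI)
  fix i assume i: "i < length cs"
  show "R (cs ! i) (cs ! ((i + 1) mod length cs))"
  proof (cases "Suc i < length cs")
    case True
    then show ?thesis
      using successively_nth[OF assms(1) True] by simp
  next
    case False
    with i have "cs \<noteq> []" "i = length cs - 1" by auto
    then have "cs ! i = last cs" "cs ! ((i + 1) mod length cs) = hd cs"
      by (simp_all add: last_conv_nth hd_conv_nth)
    with assms(5) show ?thesis by simp
  qed
qed (use assms in auto)

definition covering_path :: "'a set \<Rightarrow> ('a \<Rightarrow> 'a \<Rightarrow> bool) \<Rightarrow> 'a \<Rightarrow> 'a \<Rightarrow> 'a list \<Rightarrow> bool" where
  "covering_path P le y z cs \<longleftrightarrow> cs \<noteq> [] \<and> hd cs = y \<and> last cs = z \<and> distinct cs \<and>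
     set cs \<subseteq> {w\<in>P. le y w \<and> le w z} \<and> successively (covers P le) cs"

locale finite_poset =
  fixes P :: "'a set" and le :: "'a \<Rightarrow> 'a \<Rightarrow> bool"
  assumes finite: "finite P" and poset: "poset_on P le"
begin

lemma poset_refl: "x \<in> P \<Longrightarrow> le x x"
  using poset unfolding poset_on_def by blast

lemma poset_antisym: "x \<in> P \<Longrightarrow> y \<in> P \<Longrightarrow> le x y \<Longrightarrow> le y x \<Longrightarrow> x = y"
  using poset unfolding poset_on_def by blast

lemma poset_trans: "x \<in> P \<Longrightarrow> y \<in> P \<Longrightarrow> z \<in> P \<Longrightarrow> le x y \<Longrightarrow> le y z \<Longrightarrow> le x z"
  using poset unfolding poset_on_def by blast

lemma dual: "finite_poset P le\<inverse>\<inverse>"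
  using finite poset unfolding finite_poset_def poset_on_def conversep_iff by blast

lemma ex_minimal_in:
  assumes "S \<subseteq> P" "S \<noteq> {}"
  shows "\<exists>m\<in>S. \<forall>s\<in>S. le s m \<longrightarrow> s = m"
proof -
  let ?down = "\<lambda>m. card {w\<in>S. le w m}"
  obtain m where m: "m \<in> S" and least: "\<And>s. s \<in> S \<Longrightarrow> ?down m \<le> ?down s"
    using ex_has_least_nat[of "\<lambda>m. m \<in> S" _ ?down] assms(2) by blast
  have "s = m" if s: "s \<in> S" "le s m" for s
  proof (rule ccontr)
    assume "s \<noteq> m"
    have "{w\<in>S. le w s} \<subseteq> {w\<in>S. le w m}"
      using assms(1) m s by (auto intro: poset_trans[of _ s m])
    moreover have "m \<in> {w\<in>S. le w m} - {w\<in>S. le w s}"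
      using assms(1) m s \<open>s \<noteq> m\<close> poset_refl[of m] poset_antisym[of s m] by auto
    ultimately have "?down s < ?down m"
      using finite_subset[OF assms(1) finite] by (intro psubset_card_mono) auto
    with least[OF s(1)] show False by simp
  qed
  with m show ?thesis by blast
qed

lemma ex_maximal_in:
  "S \<subseteq> P \<Longrightarrow> S \<noteq> {} \<Longrightarrow> \<exists>m\<in>S. \<forall>s\<in>S. le m s \<longrightarrow> s = m"
  using finite_poset.ex_minimal_in[OF dual] by simp

lemma ex_maximal_element_above:
  assumes xP: "x \<in> P"
  shows "\<exists>l\<in>minimal_elements P le\<inverse>\<inverse>. le x l"
proof -
  obtain l where l: "l \<in> P" "le x l" and lmax: "\<And>s. s \<in> P \<Longrightarrow> le x s \<Longrightarrow> le l s \<Longrightarrow> s = l"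
    using ex_maximal_in[of "{w\<in>P. le x w}"] xP poset_refl by blast
  have "l \<in> minimal_elements P le\<inverse>\<inverse>"
    using l lmax xP poset_trans[of x l] unfolding minimal_elements_def lt_def by auto
  with l show ?thesis by blast
qed

lemma ex_upper_cover_below:
  assumes xP: "x \<in> P" and aP: "a \<in> P" and "lt le x a"
  shows "\<exists>a'. covers P le x a' \<and> le a' a"
proof -
  let ?S = "{w\<in>P. lt le x w \<and> le w a}"
  obtain m where m: "m \<in> ?S" and mmin: "\<And>s. s \<in> ?S \<Longrightarrow> le s m \<Longrightarrow> s = m"
    using ex_minimal_in[of ?S] assms poset_refl by blast
  have "\<not> (\<exists>z\<in>P. lt le x z \<and> lt le z m)"
  proof
    assume "\<exists>z\<in>P. lt le x z \<and> lt le z m"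
    then obtain z where "z \<in> P" "lt le x z" "lt le z m" by blast
    with m aP mmin[of z] poset_trans[of z m a] show False unfolding lt_def by auto
  qed
  with xP m have "covers P le x m" unfolding covers_def by simp
  with m show ?thesis by blast
qed

lemma minimal_elements_iff_no_lower_cover:
  assumes "x \<in> P"
  shows "x \<in> minimal_elements P le \<longleftrightarrow> \<not> (\<exists>y. covers P le y x)"
proof
  assume "x \<in> minimal_elements P le"
  then show "\<not> (\<exists>y. covers P le y x)"
    unfolding minimal_elements_def covers_def by blast
next
  assume none: "\<not> (\<exists>y. covers P le y x)"
  have "\<not> lt le y x" if "y \<in> P" for y
    using finite_poset.ex_upper_cover_below[OF dual assms that] none by auto
  with assms show "x \<in> minimal_elements P le"
    unfolding minimal_elements_def by blast
qed

lemma ex_covering_path: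
  assumes "y \<in> P" "z \<in> P" "le y z"
  shows "\<exists>cs. covering_path P le y z cs"
proof (rule ccontr)
  let ?B = "{y\<in>P. le y z \<and> \<not> (\<exists>cs. covering_path P le y z cs)}"
  assume "\<not> (\<exists>cs. covering_path P le y z cs)"
  with assms have "?B \<noteq> {}" by blast
  then obtain y where y: "y \<in> P" "le y z" and no_path: "\<not> (\<exists>cs. covering_path P le y z cs)"
    and ymax: "\<And>s. s \<in> ?B \<Longrightarrow> le y s \<Longrightarrow> s = y"
    using ex_maximal_in[of ?B] by blast
  have "covering_path P le z z [z]"
    using \<open>z \<in> P\<close> poset_refl by (simp add: covering_path_def)
  with no_path y have "lt le y z"
    unfolding lt_def by blast
  then obtain y' where y': "covers P le y y'" "le y' z"
    using ex_upper_cover_below y \<open>z \<in> P\<close> by blast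
  then have y'P: "y' \<in> P" and yy': "le y y'" "y' \<noteq> y"
    unfolding covers_def lt_def by auto
  with ymax y'(2) obtain cs where cs: "covering_path P le y' z cs"
    by blast
  have "covering_path P le y z (y # cs)"
    using cs y y' yy' y'P poset_refl[of y] poset_antisym[of y y'] poset_trans[of y y']
    by (auto simp: covering_path_def successively_Cons)
  with no_path show False by blast
qed

lemma hasse_cycle_from_covering_paths:
  assumes xa: "covers P le x a" and xb: "covers P le x b"
    and p: "covering_path P le a c p" and q: "covering_path P le b c q"
    and "c \<noteq> a" "c \<noteq> b" and meet: "set p \<inter> set q = {c}"
  shows "has_cycle P (hasse_adj P le)"
proof -
  from xa xb have xP: "x \<in> P" and aP: "a \<in> P" and bP: "b \<in> P" and "lt le x a" "lt le x b"
    unfolding covers_def by auto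
  from p \<open>c \<noteq> a\<close> obtain p' where p': "p = a # p'" "p' \<noteq> []"
    unfolding covering_path_def by (cases p) (auto split: if_splits)
  from q obtain q' where q': "q = q' @ [c]"
    unfolding covering_path_def by (metis append_butlast_last_id)
  with q \<open>c \<noteq> b\<close> have "q' \<noteq> []" "hd q' = b"
    unfolding covering_path_def by (cases q'; auto)+
  have "set p \<inter> set q' = {}"
    using meet q q' unfolding covering_path_def by auto
  moreover have "x \<notin> set p" "x \<notin> set q'"
  proof -
    have "le a w" if "w \<in> set p" for w
      using that p unfolding covering_path_def by auto
    moreover have "le b w" if "w \<in> set q" for w
      using that q unfolding covering_path_def by auto
    ultimately show "x \<notin> set p" "x \<notin> set q'"
      using q' xP aP bP \<open>lt le x a\<close> \<open>lt le x b\<close> poset_antisym[of x a] poset_antisym[of x b]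
      unfolding lt_def by auto
  qed
  moreover have "successively (hasse_adj P le) (x # p @ rev q')"
  proof -
    have "successively (hasse_adj P le) p" "successively (hasse_adj P le)\<inverse>\<inverse> q'"
      using p q q' unfolding covering_path_def hasse_adj_def
      by (auto simp: successively_append_iff elim: successively_mono)
    moreover have "covers P le (last q') c"
      using q q' \<open>q' \<noteq> []\<close> unfolding covering_path_def
      by (auto simp: successively_append_iff)
    ultimately show ?thesis
      using xa p p' q \<open>q' \<noteq> []\<close> unfolding covering_path_def hasse_adj_def
      by (auto simp: successively_append_iff successively_Cons hd_rev)
  qed
  ultimately show ?thesis
    using p p' q q' xP xb \<open>hd q' = b\<close> \<open>q' \<noteq> []\<close>
    by (intro has_cycleI[of _ "x # p @ rev q'"])
      (auto simp: covering_path_def hasse_adj_def last_rev Suc_le_eq)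
qed

lemma not_chain_above_below_basic:
  assumes x: "basic P le x" and yP: "y \<in> P" and "lt le y x"
  shows "\<not> chain_above P le y"
proof
  assume y_chain: "chain_above P le y"
  from x have xP: "x \<in> P" and x_chain_below: "chain_above P le\<inverse>\<inverse> x"
    and no_twin: "\<not> (\<exists>u\<in>P. lt le u x \<and> order_twins P le u x)"
    by (simp_all add: basic_iff)
  obtain c where cP: "c \<in> P" and "lt le c x"
    and cmax: "\<And>s. s \<in> P \<Longrightarrow> lt le s x \<Longrightarrow> le c s \<Longrightarrow> s = c"
    using ex_maximal_in[of "{w\<in>P. lt le w x}"] yP \<open>lt le y x\<close> by blast
  have below_c: "le w c" if "w \<in> P" "lt le w x" for w
    using x_chain_below that cP \<open>lt le c x\<close> cmax[OF that] poset_refl[OF cP]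
    unfolding chain_above_def incomparable_def by auto
  have "order_twins P le c x"
    unfolding order_twins_def
  proof (intro ballI impI conjI iffI)
    fix w assume wP: "w \<in> P" and w: "w \<noteq> c \<and> w \<noteq> x"
    show "le w x" if "le w c"
      using that poset_trans[OF wP cP xP] \<open>lt le c x\<close> unfolding lt_def by blast
    show "le w c" if "le w x"
      using that w wP below_c unfolding lt_def by blast
    show "le c w" if "le x w"
      using that poset_trans[OF cP xP wP] \<open>lt le c x\<close> unfolding lt_def by blast
    show "le x w" if "le c w"
    proof -
      have "le y c"
        using below_c yP \<open>lt le y x\<close> by blast
      then have "lt le y w"
        using that w yP cP wP poset_trans[OF yP cP wP] poset_antisym[OF yP cP]
        unfolding lt_def by blast
      with y_chain wP xP \<open>lt le y x\<close> have "le w x \<or> le x w"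
        unfolding chain_above_def incomparable_def by blast
      with that w wP cmax show ?thesis
        unfolding lt_def by blast
    qed
  qed
  with no_twin cP \<open>lt le c x\<close> show False by blast
qed

lemma basic_eq_minimal_elements_if_chains_above:
  assumes "\<forall>x\<in>P. chain_above P le x"
  shows "{x\<in>P. basic P le x} = minimal_elements P le"
proof (intro equalityI subsetI)
  fix x assume "x \<in> {x\<in>P. basic P le x}"
  with assms not_chain_above_below_basic show "x \<in> minimal_elements P le"
    unfolding minimal_elements_def by blast
next
  fix x assume "x \<in> minimal_elements P le"
  then have xP: "x \<in> P" and nothing_below: "\<not> (\<exists>y\<in>P. lt le y x)"
    unfolding minimal_elements_def by auto
  then have "chain_above P le\<inverse>\<inverse> x"
    unfolding chain_above_def by simp
  with xP nothing_below assms show "x \<in> {x\<in>P. basic P le x}"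
    by (simp add: basic_iff)
qed

lemma unique_maximal_above_iff_chain_above:
  assumes chains_below: "\<forall>x\<in>P. chain_above P le\<inverse>\<inverse> x" and xP: "x \<in> P"
  shows "(\<exists>!l. l \<in> minimal_elements P le\<inverse>\<inverse> \<and> le x l) \<longleftrightarrow> chain_above P le x"
proof
  assume unique: "\<exists>!l. l \<in> minimal_elements P le\<inverse>\<inverse> \<and> le x l"
  show "chain_above P le x"
    unfolding chain_above_def
  proof
    assume "\<exists>u\<in>P. \<exists>v\<in>P. incomparable le u v \<and> lt le x u \<and> lt le x v"
    then obtain u v where uP: "u \<in> P" and vP: "v \<in> P" and uv: "incomparable le u v"
      and "lt le x u" "lt le x v" by blast
    obtain l1 l2 where l1: "l1 \<in> minimal_elements P le\<inverse>\<inverse>" "le u l1"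
      and l2: "l2 \<in> minimal_elements P le\<inverse>\<inverse>" "le v l2"
      using ex_maximal_element_above uP vP by blast
    have "le x l1" "le x l2"
      using l1 l2 xP uP vP poset_trans[of x u l1] poset_trans[of x v l2]
        \<open>lt le x u\<close> \<open>lt le x v\<close>
      unfolding minimal_elements_def lt_def by auto
    with unique l1 l2 have "l1 = l2" by blast
    with l1 l2 uv have "lt le u l1" "lt le v l1"
      unfolding incomparable_def lt_def by auto
    moreover have "chain_above P le\<inverse>\<inverse> l1"
      using chains_below l1 unfolding minimal_elements_def by blast
    ultimately show False
      using uP vP uv unfolding chain_above_def incomparable_conversep lt_conversep by blast
  qed
next
  assume x_chain: "chain_above P le x"
  obtain l where l: "l \<in> minimal_elements P le\<inverse>\<inverse>" "le x l"
    using ex_maximal_element_above xP by blast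
  moreover have "l' = l" if l': "l' \<in> minimal_elements P le\<inverse>\<inverse>" "le x l'" for l'
  proof (rule ccontr)
    assume "l' \<noteq> l"
    with l l' have "incomparable le l l'" "lt le x l" "lt le x l'"
      unfolding minimal_elements_def incomparable_def lt_def by auto
    moreover have "l \<in> P" "l' \<in> P"
      using l l' unfolding minimal_elements_def by auto
    ultimately show False
      using x_chain unfolding chain_above_def by blast
  qed
  ultimately show "\<exists>!l. l \<in> minimal_elements P le\<inverse>\<inverse> \<and> le x l" by blast
qed

lemma basic_eq_minimal_chain_above_if_chains_below:
  assumes chains_below: "\<forall>x\<in>P. chain_above P le\<inverse>\<inverse> x"
  shows "{x\<in>P. basic P le x} = minimal_elements {x\<in>P. chain_above P le x} le"
proof (intro equalityI subsetI)
  fix x assume "x \<in> {x\<in>P. basic P le x}"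
  with not_chain_above_below_basic show "x \<in> minimal_elements {x\<in>P. chain_above P le x} le"
    unfolding minimal_elements_def by (auto simp: basic_iff)
next
  fix x assume "x \<in> minimal_elements {x\<in>P. chain_above P le x} le"
  then have xP: "x \<in> P" and x_chain: "chain_above P le x"
    and below: "\<And>u. u \<in> P \<Longrightarrow> lt le u x \<Longrightarrow> \<not> chain_above P le u"
    unfolding minimal_elements_def by auto
  have "\<not> order_twins P le u x" if uP: "u \<in> P" and "lt le u x" for u
  proof
    assume twins: "order_twins P le u x"
    obtain v1 v2 where v: "v1 \<in> P" "v2 \<in> P" "incomparable le v1 v2" "lt le u v1" "lt le u v2"
      using below[OF uP \<open>lt le u x\<close>] unfolding chain_above_def by blast
    have above_x: "le x v" if "v \<in> P" "lt le u v" "v \<noteq> x" for v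
      using twins that unfolding order_twins_def lt_def by auto
    \<comment> \<open>Neither v1 nor v2 is x, since the other one would then lie above it.\<close>
    have "v1 \<noteq> x" "v2 \<noteq> x"
      using v above_x poset_refl unfolding incomparable_def by metis+
    with v above_x have "lt le x v1" "lt le x v2"
      unfolding lt_def by auto
    with x_chain v show False
      unfolding chain_above_def by blast
  qed
  with xP x_chain chains_below show "x \<in> {x\<in>P. basic P le x}"
    by (auto simp: basic_iff)
qed

end

locale hasse_forest = finite_poset +
  assumes acyclic: "\<not> has_cycle P (hasse_adj P le)"
begin

lemma dual_forest: "hasse_forest P le\<inverse>\<inverse>"
  using acyclic dual by (simp add: hasse_forest_def hasse_forest_axioms_def)

lemma upper_cover_unique:
  assumes xa: "covers P le x a" and xb: "covers P le x b"
    and "t \<in> P" "le a t" "le b t"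
  shows "a = b"
proof (rule ccontr)
  assume "a \<noteq> b"
  with xa xb have aP: "a \<in> P" and bP: "b \<in> P" and "\<not> le a b" "\<not> le b a"
    unfolding covers_def lt_def by auto
  let ?U = "{w\<in>P. le a w \<and> le b w}"
  obtain c where cP: "c \<in> P" and ac: "le a c" and bc: "le b c"
    and cmin: "\<And>w. w \<in> ?U \<Longrightarrow> le w c \<Longrightarrow> w = c"
    using ex_minimal_in[of ?U] assms by blast
  obtain p where p: "covering_path P le a c p"
    using ex_covering_path[OF aP cP ac] by blast
  obtain q where q: "covering_path P le b c q"
    using ex_covering_path[OF bP cP bc] by blast
  have "c \<noteq> a" "c \<noteq> b"
    using \<open>\<not> le a b\<close> \<open>\<not> le b a\<close> ac bc by auto
  moreover have "set p \<inter> set q = {c}"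
  proof
    show "set p \<inter> set q \<subseteq> {c}"
      using p q cmin unfolding covering_path_def by blast
    show "{c} \<subseteq> set p \<inter> set q"
      using p q last_in_set[of p] last_in_set[of q] unfolding covering_path_def by auto
  qed
  ultimately have "has_cycle P (hasse_adj P le)"
    using hasse_cycle_from_covering_paths[OF xa xb p q] by blast
  with acyclic show False by contradiction
qed

lemma chain_above_if_greatest:
  assumes rP: "r \<in> P" and top: "\<forall>x\<in>P. le x r"
  shows "\<forall>x\<in>P. chain_above P le x"
proof (rule ccontr)
  let ?B = "{x\<in>P. \<not> chain_above P le x}"
  assume "\<not> (\<forall>x\<in>P. chain_above P le x)"
  then obtain x where xP: "x \<in> P" and x: "\<not> chain_above P le x"
    and xmax: "\<And>s. s \<in> ?B \<Longrightarrow> le x s \<Longrightarrow> s = x"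
    using ex_maximal_in[of ?B] by blast
  then obtain u v where uP: "u \<in> P" and vP: "v \<in> P" and uv: "incomparable le u v"
    and "lt le x u" "lt le x v"
    unfolding chain_above_def by blast
  then obtain a b where xa: "covers P le x a" "le a u" and xb: "covers P le x b" "le b v"
    using ex_upper_cover_below xP by metis
  then have aP: "a \<in> P" and bP: "b \<in> P" and "lt le x a"
    unfolding covers_def by auto
  have "a = b"
    using upper_cover_unique[OF xa(1) xb(1) rP] top aP bP by blast
  with xa xb uv aP have "lt le a u" "lt le a v"
    unfolding incomparable_def lt_def by auto
  with uP vP uv have "\<not> chain_above P le a"
    unfolding chain_above_def by blast
  with aP xmax \<open>lt le x a\<close> show False
    unfolding lt_def by blast
qed

lemma leaves_eq_minimal_elements_if_greatest:
  assumes rP: "r \<in> P" and top: "\<forall>x\<in>P. le x r"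
  shows "leaves P (hasse_adj P le) r = minimal_elements P le"
proof -
  have degree_one_iff: "degree P (hasse_adj P le) x = 1 \<longleftrightarrow> x \<in> minimal_elements P le"
    if xP: "x \<in> P" and "x \<noteq> r" for x
  proof -
    from that top have "lt le x r" unfolding lt_def by blast
    then obtain u where xu: "covers P le x u"
      using ex_upper_cover_below xP rP by blast
    then have uP: "u \<in> P" and "\<not> covers P le u x"
      using xP poset_antisym[of x u] unfolding covers_def lt_def by auto
    have "y = u" if "covers P le x y" for y
      using upper_cover_unique[OF that xu rP] top uP that unfolding covers_def by blast
    then have "{y\<in>P. hasse_adj P le x y} = insert u {y. covers P le y x}"
      using xu uP unfolding hasse_adj_def covers_def by blast
    moreover have "finite {y. covers P le y x}"
      using finite by (rule rev_finite_subset) (auto simp: covers_def)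
    ultimately have "degree P (hasse_adj P le) x = 1 \<longleftrightarrow> \<not> (\<exists>y. covers P le y x)"
      using \<open>\<not> covers P le u x\<close> by (auto simp: degree_def card_insert_if)
    with minimal_elements_iff_no_lower_cover[OF xP] show ?thesis by blast
  qed
  have "r \<in> minimal_elements P le \<longleftrightarrow> P = {r}"
    using rP top unfolding minimal_elements_def lt_def by blast
  with degree_one_iff show ?thesis
    unfolding leaves_def minimal_elements_def by blast
qed

end

theorem proposition3p8:
  fixes P :: "'a set" and le :: "'a \<Rightarrow> 'a \<Rightarrow> bool" and r :: 'a
  assumes "finite P"
    and "poset_on P le"
    and "is_tree P (hasse_adj P le)"
    and "r \<in> P"
  shows "((\<forall>x\<in>P. le x r) \<longrightarrow>
            {x \<in> P. basic P le x} = leaves P (hasse_adj P le) r \<and>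
            leaves P (hasse_adj P le) r = minimal_elements P le)
       \<and> ((\<forall>x\<in>P. le r x) \<longrightarrow>
            {x \<in> P. basic P le x} =
              minimal_elements {x \<in> P. \<exists>!l. l \<in> leaves P (hasse_adj P le) r \<and> le x l} le)"
proof -
  interpret hasse_forest P le
    using assms unfolding is_tree_def by unfold_locales auto
  interpret dual: hasse_forest P "le\<inverse>\<inverse>"
    by (rule dual_forest)
  show ?thesis
  proof (intro conjI impI)
    assume top: "\<forall>x\<in>P. le x r"
    show "leaves P (hasse_adj P le) r = minimal_elements P le"
      using leaves_eq_minimal_elements_if_greatest[OF assms(4) top] .
    then show "{x \<in> P. basic P le x} = leaves P (hasse_adj P le) r"
      using basic_eq_minimal_elements_if_chains_above chain_above_if_greatest[OF assms(4) top]
      by simp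
  next
    assume bottom: "\<forall>x\<in>P. le r x"
    have chains_below: "\<forall>x\<in>P. chain_above P le\<inverse>\<inverse> x"
      using dual.chain_above_if_greatest assms(4) bottom by simp
    have "leaves P (hasse_adj P le) r = minimal_elements P le\<inverse>\<inverse>"
      using dual.leaves_eq_minimal_elements_if_greatest assms(4) bottom by simp
    then have "{x \<in> P. \<exists>!l. l \<in> leaves P (hasse_adj P le) r \<and> le x l}
        = {x \<in> P. chain_above P le x}"
      using unique_maximal_above_iff_chain_above[OF chains_below] by (simp cong: conj_cong)
    then show "{x \<in> P. basic P le x} =
        minimal_elements {x \<in> P. \<exists>!l. l \<in> leaves P (hasse_adj P le) r \<and> le x l} le"
      using basic_eq_minimal_chain_above_if_chains_below[OF chains_below] by simp
  qed
qed

end
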